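(* Let $\mathcal{F}$ be an algebraically closed field of characteristic not $2$, $u,v\in\mathcal{F}$ nonzero, and $\mathcal{F}_2=\mathcal{F}\{e_1,e_2\}$ the $4$-dimensional $\mathcal{F}$-algebra with basis $1,e_1,e_2,e_{12}=e_1e_2$, where $e_1^2=u$, $e_2^2=v$, $e_1e_2=-e_2e_1$. Every $a\in\mathcal{F}_2$ can be written as $a=a_0+a_1e_1+a_2e_2+a_3e_{12}$ with $a_0,\dots,a_3\in\mathcal{F}$. Fix square roots $\sqrt u,\sqrt v\in\mathcal{F}$ and let $$R=\frac12\begin{pmatrix}1+\frac1{\sqrt u}e_1 & e_2-\frac1{\sqrt u}e_{12}\\ \frac1v(e_2+\frac1{\sqrt u}e_{12}) & 1-\frac1{\sqrt u}e_1\end{pmatrix},\qquad T=\frac12\begin{pmatrix}1+\frac1{\sqrt v}e_2 & e_1+\frac1{\sqrt v}e_{12}\\ \frac1u(e_1-\frac1{\sqrt v}e_{12}) & 1-\frac1{\sqrt v}e_2\end{pmatrix}.$$ Then $R^{-1}=R$, $T^{-1}=T$, and for every such $a$, $$R\begin{pmatrix}a&0\\0&a\end{pmatrix}R^{-1}=\begin{pmatrix}a_0+\sqrt u\,a_1 & v(a_2+\sqrt u\,a_3)\\ a_2-\sqrt u\,a_3 & a_0-\sqrt u\,a_1\end{pmatrix},$$ $$T\begin{pmatrix}a&0\\0&a\end{pmatrix}T^{-1}=\begin{pmatrix}a_0+\sqrt v\,a_2 & u(a_1-\sqrt v\,a_3)\\ a_1+\sqrt v\,a_3 & a_0-\sqrt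 v\,a_2\end{pmatrix}.$$ *)

theory Defs
  imports "HOL-Computational_Algebra.Polynomial"
begin

definition alg_closed :: "'a::field itself \<Rightarrow> bool" where
  "alg_closed _ \<longleftrightarrow> (\<forall>p::'a poly. degree p > 0 \<longrightarrow> (\<exists>x. poly p x = 0))"

text \<open>Elements a0 + a1 e1 + a2 e2 + a3 e12 of the algebra F{e1,e2}.\<close>
datatype 'a cl2 = CL (c0: 'a) (c1: 'a) (c2: 'a) (c3: 'a)

definition cl_scal :: "'a::field \<Rightarrow> 'a cl2" where
  "cl_scal x = CL x 0 0 0"

definition cl_one :: "'a::field cl2" where "cl_one = CL 1 0 0 0"
definition cl_e1 :: "'a::field cl2" where "cl_e1 = CL 0 1 0 0"
definition cl_e2 :: "'a::field cl2" where "cl_e2 = CL 0 0 1 0"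
definition cl_e12 :: "'a::field cl2" where "cl_e12 = CL 0 0 0 1"

definition cl_add :: "'a::field cl2 \<Rightarrow> 'a cl2 \<Rightarrow> 'a cl2" where
  "cl_add a b = CL (c0 a + c0 b) (c1 a + c1 b) (c2 a + c2 b) (c3 a + c3 b)"

definition cl_neg :: "'a::field cl2 \<Rightarrow> 'a cl2" where
  "cl_neg a = CL (- c0 a) (- c1 a) (- c2 a) (- c3 a)"

definition cl_smult :: "'a::field \<Rightarrow> 'a cl2 \<Rightarrow> 'a cl2" where
  "cl_smult x a = CL (x * c0 a) (x * c1 a) (x * c2 a) (x * c3 a)"

text \<open>Multiplication determined by e1^2 = u, e2^2 = v, e12 = e1 e2 = - e2 e1,
  extended bilinearly (so e1 e12 = u e2, e12 e1 = -u e2, e2 e12 = -v e1,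
  e12 e2 = v e1, e12^2 = -uv).\<close>
definition cl_mul :: "'a::field \<Rightarrow> 'a \<Rightarrow> 'a cl2 \<Rightarrow> 'a cl2 \<Rightarrow> 'a cl2" where
  "cl_mul u v a b = CL
     (c0 a * c0 b + u * c1 a * c1 b + v * c2 a * c2 b - u * v * c3 a * c3 b)
     (c0 a * c1 b + c1 a * c0 b - v * c2 a * c3 b + v * c3 a * c2 b)
     (c0 a * c2 b + c2 a * c0 b + u * c1 a * c3 b - u * c3 a * c1 b)
     (c0 a * c3 b + c3 a * c0 b + c1 a * c2 b - c2 a * c1 b)"

text \<open>2x2 matrices over F{e1,e2}: M2 a11 a12 a21 a22.\<close>
datatype 'b mat2 = M2 'b 'b 'b 'b

fun m2_mul :: "'a::field \<Rightarrow> 'a \<Rightarrow> 'a cl2 mat2 \<Rightarrow> 'a cl2 mat2 \<Rightarrow> 'a cl2 mat2" where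
  "m2_mul u v (M2 a b c d) (M2 a' b' c' d') =
     M2 (cl_add (cl_mul u v a a') (cl_mul u v b c'))
        (cl_add (cl_mul u v a b') (cl_mul u v b d'))
        (cl_add (cl_mul u v c a') (cl_mul u v d c'))
        (cl_add (cl_mul u v c b') (cl_mul u v d d'))"

definition m2_id :: "'a::field cl2 mat2" where
  "m2_id = M2 cl_one (cl_scal 0) (cl_scal 0) cl_one"

definition m2_is_inverse :: "'a::field \<Rightarrow> 'a \<Rightarrow> 'a cl2 mat2 \<Rightarrow> 'a cl2 mat2 \<Rightarrow> bool" where
  "m2_is_inverse u v A B \<longleftrightarrow> m2_mul u v A B = m2_id \<and> m2_mul u v B A = m2_id"

definition matR :: "'a::field \<Rightarrow> 'a \<Rightarrow> 'a \<Rightarrow> 'a cl2 mat2" where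
  "matR u v su = M2
     (cl_smult (1/2) (cl_add cl_one (cl_smult (1/su) cl_e1)))
     (cl_smult (1/2) (cl_add cl_e2 (cl_neg (cl_smult (1/su) cl_e12))))
     (cl_smult (1/2) (cl_smult (1/v) (cl_add cl_e2 (cl_smult (1/su) cl_e12))))
     (cl_smult (1/2) (cl_add cl_one (cl_neg (cl_smult (1/su) cl_e1))))"

definition matT :: "'a::field \<Rightarrow> 'a \<Rightarrow> 'a \<Rightarrow> 'a cl2 mat2" where
  "matT u v sv = M2
     (cl_smult (1/2) (cl_add cl_one (cl_smult (1/sv) cl_e2)))
     (cl_smult (1/2) (cl_add cl_e1 (cl_smult (1/sv) cl_e12)))
     (cl_smult (1/2) (cl_smult (1/u) (cl_add cl_e1 (cl_neg (cl_smult (1/sv) cl_e12)))))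
     (cl_smult (1/2) (cl_add cl_one (cl_neg (cl_smult (1/sv) cl_e2))))"

end

theory Submission
  imports Defs
begin

text \<open>\<open>R\<close> is checked to be an involution and to conjugate \<open>diag(a, a)\<close> into the image of
  \<open>a\<close> under the representation \<open>e\<^sub>1 \<mapsto> diag(\<surd>u, -\<surd>u)\<close>, \<open>e\<^sub>2 \<mapsto> [[0, v], [1, 0]]\<close> by
  direct computation in coordinates. The statements about \<open>T\<close> need no further computation:
  exchanging \<open>e\<^sub>1\<close> and \<open>e\<^sub>2\<close> (and negating \<open>e\<^sub>12\<close>) is an isomorphism
  \<open>F{e\<^sub>1, e\<^sub>2}\<^sub>u\<^sub>,\<^sub>v \<cong> F{e\<^sub>1, e\<^sub>2}\<^sub>v\<^sub>,\<^sub>u\<close>, and applied entrywise it carries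
  \<open>R\<close> for \<open>(v, u, \<surd>v)\<close> to \<open>T\<close> for \<open>(u, v, \<surd>v)\<close>.\<close>

definition cl_swap :: "'a::field cl2 \<Rightarrow> 'a cl2" where
  "cl_swap a = CL (c0 a) (c2 a) (c1 a) (- c3 a)"

lemma cl_swap_CL [simp]: "cl_swap (CL a0 a1 a2 a3) = CL a0 a2 a1 (- a3)"
  by (simp add: cl_swap_def)

lemma cl_swap_swap [simp]: "cl_swap (cl_swap a) = a"
  by (cases a) simp

lemma cl_swap_scal [simp]: "cl_swap (cl_scal x) = cl_scal x"
  by (simp add: cl_scal_def)

lemma cl_swap_add: "cl_swap (cl_add a b) = cl_add (cl_swap a) (cl_swap b)"
  by (simp add: cl_swap_def cl_add_def)

lemma cl_swap_mul: "cl_swap (cl_mul u v a b) = cl_mul v u (cl_swap a) (cl_swap b)"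
  by (simp add: cl_swap_def cl_mul_def algebra_simps)

definition m2_swap :: "'a::field cl2 mat2 \<Rightarrow> 'a cl2 mat2" where
  "m2_swap = map_mat2 cl_swap"

lemma m2_swap_M2 [simp]:
  "m2_swap (M2 a b c d) = M2 (cl_swap a) (cl_swap b) (cl_swap c) (cl_swap d)"
  by (simp add: m2_swap_def)

lemma m2_swap_mul: "m2_swap (m2_mul u v A B) = m2_mul v u (m2_swap A) (m2_swap B)"
  by (cases A; cases B) (simp add: cl_swap_add cl_swap_mul)

lemma m2_swap_id [simp]: "m2_swap m2_id = m2_id"
  by (simp add: m2_id_def cl_one_def cl_scal_def)

lemma matT_eq_swap_matR: "matT u v sv = m2_swap (matR v u sv)"
  by (simp add: matT_def matR_def cl_add_def cl_neg_def cl_smult_def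
      cl_one_def cl_e1_def cl_e2_def cl_e12_def)

lemma matR_coords:
  "matR u v su = M2
     (CL (1/2) (1/(2*su)) 0 0) (CL 0 0 (1/2) (- 1/(2*su)))
     (CL 0 0 (1/(2*v)) (1/(2*su*v))) (CL (1/2) (- 1/(2*su)) 0 0)"
  by (simp add: matR_def cl_add_def cl_neg_def cl_smult_def
      cl_one_def cl_e1_def cl_e2_def cl_e12_def)

text \<open>Lets the simplifier discharge the denominators \<open>4, 8, \<dots>, 256\<close> produced by the
  factors \<open>1/2\<close> when only \<open>2 \<noteq> 0\<close> is known.\<close>
lemma numeral_Bit0_eq_zero_iff:
  assumes "(2::'a::field) \<noteq> 0"
  shows "(numeral (Num.Bit0 n) = (0::'a)) \<longleftrightarrow> (numeral n = (0::'a))"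
proof -
  have "numeral (Num.Bit0 n) = (2::'a) * numeral n"
    by (metis mult_2 numeral_Bit0)
  with assms show ?thesis by (metis mult_eq_0_iff)
qed

lemma matR_involution:
  fixes u v su :: "'a::field"
  assumes "(2::'a) \<noteq> 0" "su \<noteq> 0" "v \<noteq> 0" "su * su = u"
  shows "m2_mul u v (matR u v su) (matR u v su) = m2_id"
  using assms
  by (simp add: matR_coords m2_id_def cl_mul_def cl_add_def cl_one_def cl_scal_def
      numeral_Bit0_eq_zero_iff field_simps flip: assms(4))

lemma matR_conj_diag:
  fixes u v su :: "'a::field"
  assumes "(2::'a) \<noteq> 0" "su \<noteq> 0" "v \<noteq> 0" "su * su = u"
  shows "m2_mul u v (m2_mul u v (matR u v su) (M2 a (cl_scal 0) (cl_scal 0) a)) (matR u v su)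
    = M2 (cl_scal (c0 a + su * c1 a)) (cl_scal (v * (c2 a + su * c3 a)))
         (cl_scal (c2 a - su * c3 a)) (cl_scal (c0 a - su * c1 a))"
  using assms
  by (simp add: matR_coords cl_mul_def cl_add_def cl_scal_def
      numeral_Bit0_eq_zero_iff field_simps flip: assms(4))

lemma matT_involution:
  fixes u v sv :: "'a::field"
  assumes "(2::'a) \<noteq> 0" "sv \<noteq> 0" "u \<noteq> 0" "sv * sv = v"
  shows "m2_mul u v (matT u v sv) (matT u v sv) = m2_id"
  using matR_involution[OF assms] m2_swap_mul[of v u, symmetric]
  by (simp add: matT_eq_swap_matR)

lemma matT_conj_diag:
  fixes u v sv :: "'a::field"
  assumes "(2::'a) \<noteq> 0" "sv \<noteq> 0" "u \<noteq> 0" "sv * sv = v"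
  shows "m2_mul u v (m2_mul u v (matT u v sv) (M2 a (cl_scal 0) (cl_scal 0) a)) (matT u v sv)
    = M2 (cl_scal (c0 a + sv * c2 a)) (cl_scal (u * (c1 a - sv * c3 a)))
         (cl_scal (c1 a + sv * c3 a)) (cl_scal (c0 a - sv * c2 a))"
proof -
  let ?D = "\<lambda>b. M2 b (cl_scal 0) (cl_scal 0) b"
  have "m2_mul u v (m2_mul u v (matT u v sv) (?D a)) (matT u v sv)
      = m2_swap (m2_mul v u (m2_mul v u (matR v u sv) (?D (cl_swap a))) (matR v u sv))"
    by (simp add: matT_eq_swap_matR m2_swap_mul)
  also have "\<dots> = m2_swap (M2 (cl_scal (c0 a + sv * c2 a)) (cl_scal (u * (c1 a - sv * c3 a)))
                              (cl_scal (c1 a + sv * c3 a)) (cl_scal (c0 a - sv * c2 a)))"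
    using matR_conj_diag[OF assms, of "cl_swap a"] by (simp add: cl_swap_def)
  finally show ?thesis
    by simp
qed

theorem lemma3:
  fixes u v su sv :: "'a::field"
  assumes "alg_closed TYPE('a)"
    and "(2::'a) \<noteq> 0"
    and "u \<noteq> 0" and "v \<noteq> 0"
    and "su * su = u" and "sv * sv = v"
  shows "m2_is_inverse u v (matR u v su) (matR u v su) \<and>
         m2_is_inverse u v (matT u v sv) (matT u v sv) \<and>
         (\<forall>a0 a1 a2 a3. let a = CL a0 a1 a2 a3 in
           m2_mul u v (m2_mul u v (matR u v su) (M2 a (cl_scal 0) (cl_scal 0) a)) (matR u v su)
           = M2 (cl_scal (a0 + su * a1)) (cl_scal (v * (a2 + su * a3)))
                (cl_scal (a2 - su * a3)) (cl_scal (a0 - su * a1))) \<and>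
         (\<forall>a0 a1 a2 a3. let a = CL a0 a1 a2 a3 in
           m2_mul u v (m2_mul u v (matT u v sv) (M2 a (cl_scal 0) (cl_scal 0) a)) (matT u v sv)
           = M2 (cl_scal (a0 + sv * a2)) (cl_scal (u * (a1 - sv * a3)))
                (cl_scal (a1 + sv * a3)) (cl_scal (a0 - sv * a2)))"
proof -
  have "su \<noteq> 0" "sv \<noteq> 0"
    using assms by auto
  then have R: "(2::'a) \<noteq> 0" "su \<noteq> 0" "v \<noteq> 0" "su * su = u"
    and T: "(2::'a) \<noteq> 0" "sv \<noteq> 0" "u \<noteq> 0" "sv * sv = v"
    using assms by simp_all
  show ?thesis
    using matR_involution[OF R] matT_involution[OF T]
      matR_conj_diag[OF R] matT_conj_diag[OF T]
    by (simp add: m2_is_inverse_def)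
qed

end
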